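(* Let $4\le\beta\le n-2$ and let $\gamma_1,\gamma_2,\gamma_3,\gamma_4$ be positive integers with $\gamma_1+\gamma_2+\gamma_3+\gamma_4<n$ such that $\gamma_i\ge 2$ for some $i\in\{1,2,3,4\}$. Then $\mathcal T_{(n),(\beta),(\gamma_1,\gamma_2,\gamma_3,\gamma_4)}$ has infinitely many $G$-orbits.
   Context: $\mathbb F$ is an infinite field of characteristic $\ne 2$. Equip $\mathbb F^{2n}$ (canonical basis $e_1,\ldots,e_{2n}$) with the symmetric bilinear form $(e_i,e_j)=\delta_{i,2n+1-j}$, and let $G={\rm O}_{2n}(\mathbb F)$ be its isometry group. A subspace $V$ is isotropic if $(V,V)=\{0\}$. For a sequence ${\bf a}=(\alpha_1,\ldots,\alpha_p)$ of positive integers with $\sum\alpha_j\le n$, $M_{\bf a}$ is the set of flags $V_1\subset\cdots\subset V_p$ in $\mathbb F^{2n}$ with $\dim V_j=\alpha_1+\cdots+\alpha_j$ and $V_p$ isotropic. $\mathcal T_{{\bf a},{\bf b},{\bf c}}=M_{\bf a}\times M_{\bf b}\times M_{\bf c}$ with the diagonal $G$-action. *)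

theory Defs
  imports Complex_Main "HOL-Library.Function_Algebras"
begin

text \<open>The space F^(2n) is modelled as the functions nat => F vanishing outside {..<2n};
  the canonical basis vector e_(i+1) is the indicator of index i (0-based).\<close>

definition Vsp :: "nat \<Rightarrow> (nat \<Rightarrow> 'a::field) set" where
  "Vsp n = {v. \<forall>i\<ge>2*n. v i = 0}"

definition scl :: "'a::field \<Rightarrow> (nat \<Rightarrow> 'a) \<Rightarrow> nat \<Rightarrow> 'a" where
  "scl c v = (\<lambda>i. c * v i)"

text \<open>(e_i, e_j) = delta_(i, 2n+1-j), i.e. 0-based index i pairs with 2n-1-i.\<close>
definition bform :: "nat \<Rightarrow> (nat \<Rightarrow> 'a::field) \<Rightarrow> (nat \<Rightarrow> 'a) \<Rightarrow> 'a" where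
  "bform n u v = (\<Sum>i<2*n. u i * v (2*n - 1 - i))"

definition is_subspace :: "nat \<Rightarrow> (nat \<Rightarrow> 'a::field) set \<Rightarrow> bool" where
  "is_subspace n V \<longleftrightarrow> Modules.module.subspace scl V \<and> V \<subseteq> Vsp n"

definition sdim :: "(nat \<Rightarrow> 'a::field) set \<Rightarrow> nat" where
  "sdim V = Vector_Spaces.vector_space.dim scl V"

definition isotropic :: "nat \<Rightarrow> (nat \<Rightarrow> 'a::field) set \<Rightarrow> bool" where
  "isotropic n V \<longleftrightarrow> (\<forall>u\<in>V. \<forall>v\<in>V. bform n u v = 0)"

definition flags :: "nat \<Rightarrow> nat list \<Rightarrow> (nat \<Rightarrow> 'a::field) set list set" where
  "flags n a = {Vs. length Vs = length a
     \<and> (\<forall>j<length a. is_subspace n (Vs ! j) \<and> sdim (Vs ! j) = sum_list (take (Suc j) a))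
     \<and> (\<forall>j. Suc j < length a \<longrightarrow> Vs ! j \<subseteq> Vs ! Suc j)
     \<and> (a \<noteq> [] \<longrightarrow> isotropic n (last Vs))}"

definition orth_group :: "nat \<Rightarrow> ((nat \<Rightarrow> 'a::field) \<Rightarrow> (nat \<Rightarrow> 'a)) set" where
  "orth_group n = {g. Vector_Spaces.linear scl scl g \<and> bij_betw g (Vsp n) (Vsp n)
     \<and> (\<forall>u\<in>Vsp n. \<forall>v\<in>Vsp n. bform n (g u) (g v) = bform n u v)}"

definition triple_space :: "nat \<Rightarrow> nat list \<Rightarrow> nat list \<Rightarrow> nat list
    \<Rightarrow> ((nat \<Rightarrow> 'a::field) set list \<times> (nat \<Rightarrow> 'a) set list \<times> (nat \<Rightarrow> 'a) set list) set" where
  "triple_space n a b c = flags n a \<times> flags n b \<times> flags n c"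

definition act :: "((nat \<Rightarrow> 'a) \<Rightarrow> (nat \<Rightarrow> 'a))
    \<Rightarrow> (nat \<Rightarrow> 'a) set list \<times> (nat \<Rightarrow> 'a) set list \<times> (nat \<Rightarrow> 'a) set list
    \<Rightarrow> (nat \<Rightarrow> 'a) set list \<times> (nat \<Rightarrow> 'a) set list \<times> (nat \<Rightarrow> 'a) set list" where
  "act g x = (case x of (A, B, C) \<Rightarrow> (map ((`) g) A, map ((`) g) B, map ((`) g) C))"

definition orbit :: "nat \<Rightarrow> (nat \<Rightarrow> 'a::field) set list \<times> (nat \<Rightarrow> 'a) set list \<times> (nat \<Rightarrow> 'a) set list
    \<Rightarrow> ((nat \<Rightarrow> 'a) set list \<times> (nat \<Rightarrow> 'a) set list \<times> (nat \<Rightarrow> 'a) set list) set" where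
  "orbit n x = {act g x | g. g \<in> orth_group n}"

end

(* Fix i with gamma_i >= 2.  For a parameter t we write down an explicit triple: the coordinate
   Lagrangian W = <e_1, ..., e_n>, the isotropic subspace U spanned by the last beta basis vectors,
   and an isotropic flag C_1 < ... < C_4 spanned by four vectors (the first one depending on t),
   one extra vector entering at level i, and further basis vectors padding the dimensions to
   gamma_1 + ... + gamma_k.  In the plane W /\ (C_3 + U) = <e_1, q>, where q = e_3 + e_(n-1),
   four lines are obtained from the triple by intersections, sums and orthogonal complements:
     W /\ (C_2 + U) = <q>,                     W /\ (C_3 + U) /\ C_i^perp = <e_1 - q>,
     W /\ (C_3 + U) /\ (C_1 + U^perp) = <t e_1 + q>,   W /\ (C_3 + U) /\ (W /\ C_4 + U^perp) = <e_1>.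
   An isometry carrying the triple for s to the triple for t maps each of these lines to its
   counterpart, so it preserves their cross ratio, which is t.  Hence s = t, and as F is infinite
   there are infinitely many orbits. *)

theory Submission
  imports Defs "HOL-Library.Set_Algebras" "HOL-Library.Sublist"
begin

interpretation fv: vector_space "scl :: 'a::field \<Rightarrow> (nat \<Rightarrow> 'a) \<Rightarrow> nat \<Rightarrow> 'a"
  by unfold_locales (auto simp: scl_def fun_eq_iff algebra_simps)

lemma scl_apply: "scl c v i = c * v i"
  by (simp add: scl_def)

definition unit_vec :: "nat \<Rightarrow> nat \<Rightarrow> 'a::field" where
  "unit_vec j = (\<lambda>i. if i = j then 1 else 0)"

lemma unit_vec_apply [simp]: "unit_vec j i = (if i = j then 1 else 0)"
  by (simp add: unit_vec_def)

lemma unit_vec_nonzero: "unit_vec j \<noteq> (0 :: nat \<Rightarrow> 'a::field)"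
  by (metis unit_vec_apply zero_fun_apply one_neq_zero)

subsection \<open>Linear independence of echelon lists\<close>

fun echelon :: "(nat \<Rightarrow> 'a::field) list \<Rightarrow> bool" where
  "echelon [] = True"
| "echelon (x # xs) \<longleftrightarrow> (\<exists>k. x k \<noteq> 0 \<and> (\<forall>y\<in>set xs. y k = 0)) \<and> echelon xs"

lemma echelon_ConsI: "x k \<noteq> 0 \<Longrightarrow> \<forall>y\<in>set xs. y k = 0 \<Longrightarrow> echelon xs \<Longrightarrow> echelon (x # xs)"
  by auto

lemma echelon_independent:
  "echelon xs \<Longrightarrow> fv.independent (set xs) \<and> distinct xs"
proof (induction xs)
  case Nil
  then show ?case by (simp add: fv.independent_empty)
next
  case (Cons x xs)
  then obtain k where k: "x k \<noteq> 0" "\<forall>y\<in>set xs. y k = 0" and "echelon xs"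
    by auto
  have "fv.subspace {v. v k = 0}"
    by (auto simp: fv.subspace_def scl_apply)
  then have "x \<notin> fv.span (set xs)"
    using fv.span_minimal[of "set xs" "{v. v k = 0}"] k by auto
  moreover from this have "x \<notin> set xs"
    using fv.span_base by blast
  ultimately show ?case
    using Cons.IH \<open>echelon xs\<close> k fv.independent_insert[of x "set xs"] by auto
qed

lemma echelon_subseq: "subseq xs ys \<Longrightarrow> echelon ys \<Longrightarrow> echelon xs"
proof (induction rule: list_emb.induct)
  case (list_emb_Cons2 x y xs ys)
  have "set xs \<subseteq> set ys"
    using list_emb_Cons2.hyps(2) by (auto elim: list_emb_set)
  with list_emb_Cons2 show ?case by fastforce
qed auto

lemma echelon_unit_vecs: "distinct ks \<Longrightarrow> echelon (map unit_vec ks)"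
  by (induction ks) auto

lemma span_echelon_dim: "echelon xs \<Longrightarrow> sdim (fv.span (set xs)) = length xs"
  using echelon_independent fv.dim_span_eq_card_independent distinct_card
  unfolding sdim_def by metis

subsection \<open>The bilinear form\<close>

lemma bform_sym: "bform n u v = bform n v u"
  unfolding bform_def
  by (rule sum.reindex_bij_witness[of _ "\<lambda>i. 2*n-1-i" "\<lambda>i. 2*n-1-i"]) (auto simp: mult.commute)

lemma bform_add_left: "bform n (u + v) w = bform n u w + bform n v w"
  by (simp add: bform_def sum.distrib distrib_right)

lemma bform_diff_left: "bform n (u - v) w = bform n u w - bform n v w"
  by (simp add: bform_def sum_subtractf left_diff_distrib)

lemma bform_scl_left: "bform n (scl c u) w = c * bform n u w"
  by (simp add: bform_def sum_distrib_left mult.assoc scl_apply)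

lemma bform_unit_vec_left:
  assumes "j < 2*n"
  shows "bform n (unit_vec j) w = w (2*n-1-j)"
proof -
  have "bform n (unit_vec j) w = (\<Sum>i<2*n. if i = j then w (2*n-1-i) else 0)"
    unfolding bform_def by (rule sum.cong) auto
  then show ?thesis
    using assms by simp
qed

lemma bform_span_right_eq_0:
  assumes "\<forall>y\<in>B. bform n x y = 0" and "y \<in> fv.span B"
  shows "bform n x y = 0"
proof -
  have "bform n 0 x = 0"
    by (simp add: bform_def)
  then have "fv.subspace {y. bform n y x = 0}"
    by (auto simp: fv.subspace_def bform_add_left bform_scl_left)
  moreover have "B \<subseteq> {y. bform n y x = 0}"
    using assms(1) bform_sym[of n x] by auto
  ultimately have "fv.span B \<subseteq> {y. bform n y x = 0}"
    by (intro fv.span_minimal)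
  then show ?thesis
    using assms(2) bform_sym[of n x y] by auto
qed

lemma isotropic_span:
  assumes "\<forall>x\<in>B. \<forall>y\<in>B. bform n x y = 0"
  shows "isotropic n (fv.span B)"
  unfolding isotropic_def
proof (intro ballI)
  fix u v assume u: "u \<in> fv.span B" and v: "v \<in> fv.span B"
  have "bform n y u = 0" if "y \<in> B" for y
    using bform_span_right_eq_0[OF _ u] assms that by auto
  then have "\<forall>y\<in>B. bform n u y = 0"
    using bform_sym[of n u] by auto
  then show "bform n u v = 0"
    by (rule bform_span_right_eq_0[OF _ v])
qed

subsection \<open>Coordinate subspaces\<close>

definition coord_space :: "nat set \<Rightarrow> (nat \<Rightarrow> 'a::field) set" where
  "coord_space K = {v. \<forall>j. j \<notin> K \<longrightarrow> v j = 0}"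

lemma Vsp_eq_coord_space: "Vsp n = coord_space {..<2*n}"
  by (auto simp: Vsp_def coord_space_def)

lemma subspace_coord_space: "fv.subspace (coord_space K)"
  unfolding fv.subspace_def coord_space_def by (auto simp: scl_apply)

lemma coord_space_add: "a \<in> coord_space K \<Longrightarrow> b \<in> coord_space K \<Longrightarrow> a + b \<in> coord_space K"
  and coord_space_diff: "a \<in> coord_space K \<Longrightarrow> b \<in> coord_space K \<Longrightarrow> a - b \<in> coord_space K"
  and coord_space_uminus: "a \<in> coord_space K \<Longrightarrow> - a \<in> coord_space K"
  and coord_space_scl: "a \<in> coord_space K \<Longrightarrow> scl c a \<in> coord_space K"
  by (auto simp: coord_space_def scl_apply)

lemma coord_space_mono: "K \<subseteq> L \<Longrightarrow> coord_space K \<subseteq> coord_space L"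
  by (auto simp: coord_space_def)

lemma span_unit_vecs:
  assumes "finite K"
  shows "fv.span (unit_vec ` K) = (coord_space K :: (nat \<Rightarrow> 'a::field) set)"
proof
  show "fv.span (unit_vec ` K) \<subseteq> coord_space K"
    by (rule fv.span_minimal[OF _ subspace_coord_space]) (auto simp: coord_space_def)
next
  show "coord_space K \<subseteq> (fv.span (unit_vec ` K) :: (nat \<Rightarrow> 'a) set)"
  proof
    fix v :: "nat \<Rightarrow> 'a" assume v: "v \<in> coord_space K"
    have "(\<Sum>j\<in>K. scl (v j) (unit_vec j)) i = v i" for i
    proof -
      have "(\<Sum>j\<in>K. scl (v j) (unit_vec j)) i = (\<Sum>j\<in>K. if i = j then v j else 0)"
        using assms by (induction K rule: finite_induct) (auto simp: scl_apply)
      then show ?thesis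
        using v assms by (auto simp: coord_space_def)
    qed
    then have "v = (\<Sum>j\<in>K. scl (v j) (unit_vec j))" by auto
    also have "\<dots> \<in> fv.span (unit_vec ` K)"
      by (intro fv.span_sum fv.span_scale fv.span_base) auto
    finally show "v \<in> fv.span (unit_vec ` K)" .
  qed
qed

lemma dim_coord_space:
  assumes "finite K"
  shows "sdim (coord_space K :: (nat \<Rightarrow> 'a::field) set) = card K"
  using span_echelon_dim[OF echelon_unit_vecs[of "sorted_list_of_set K"], where 'a='a]
  by (simp add: span_unit_vecs assms)

lemma isotropic_coord_space:
  assumes "\<forall>j\<in>K. 2*n-1-j \<notin> K"
  shows "isotropic n (coord_space K)"
  unfolding isotropic_def bform_def
proof (intro ballI sum.neutral)
  fix u v :: "nat \<Rightarrow> 'a" and j assume "u \<in> coord_space K" "v \<in> coord_space K" "j \<in> {..<2*n}"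
  then show "u j * v (2*n-1-j) = 0"
    using assms unfolding coord_space_def by (cases "j \<in> K") simp_all
qed

subsection \<open>Orthogonal complements and the orthogonal group\<close>

definition orth :: "nat \<Rightarrow> (nat \<Rightarrow> 'a::field) set \<Rightarrow> (nat \<Rightarrow> 'a) set" where
  "orth n A = {x \<in> Vsp n. \<forall>a\<in>A. bform n x a = 0}"

lemma orth_coord_space:
  assumes "K \<subseteq> {..<2*n}"
  shows "orth n (coord_space K) = {x \<in> Vsp n. \<forall>j\<in>K. x (2*n-1-j) = 0}"
proof (intro set_eqI iffI)
  fix x :: "nat \<Rightarrow> 'a" assume x: "x \<in> orth n (coord_space K)"
  have "x (2*n-1-j) = 0" if "j \<in> K" for j
  proof -
    have "unit_vec j \<in> coord_space K"
      using that by (simp add: coord_space_def)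
    then have "bform n (unit_vec j) x = 0"
      using x bform_sym[of n x] by (auto simp: orth_def)
    moreover have "j < 2*n"
      using that assms by auto
    ultimately show ?thesis
      using bform_unit_vec_left[of j n x] by simp
  qed
  then show "x \<in> {x \<in> Vsp n. \<forall>j\<in>K. x (2*n-1-j) = 0}"
    using x by (simp add: orth_def)
next
  fix x :: "nat \<Rightarrow> 'a" assume x: "x \<in> {x \<in> Vsp n. \<forall>j\<in>K. x (2*n-1-j) = 0}"
  have "bform n x a = 0" if "a \<in> coord_space K" for a
    unfolding bform_def
  proof (rule sum.neutral, intro ballI)
    fix m assume "m \<in> {..<2*n}"
    then have "2*n-1-(2*n-1-m) = m"
      by simp
    then show "x m * a (2*n-1-m) = 0"
      using x that unfolding coord_space_def by (cases "2*n-1-m \<in> K") force+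
  qed
  then show "x \<in> orth n (coord_space K)"
    using x by (simp add: orth_def)
qed

lemma orth_group_add: "g \<in> orth_group n \<Longrightarrow> g (x + y) = g x + g y"
  by (simp add: orth_group_def Vector_Spaces.linear_iff)

lemma orth_group_image_set_plus: "g \<in> orth_group n \<Longrightarrow> g ` (A + B) = g ` A + g ` B"
  by (force simp: set_plus_def orth_group_add)

lemma orth_group_image_orth:
  assumes g: "g \<in> orth_group n" and A: "A \<subseteq> Vsp n"
  shows "g ` orth n A \<subseteq> orth n (g ` A)"
proof
  fix y assume "y \<in> g ` orth n A"
  then obtain x where x: "x \<in> Vsp n" "\<forall>a\<in>A. bform n x a = 0" and y: "y = g x"
    by (auto simp: orth_def)
  have "g x \<in> Vsp n" and "\<forall>a\<in>A. bform n (g x) (g a) = bform n x a"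
    using g x(1) A by (auto simp: orth_group_def bij_betw_def)
  then show "y \<in> orth n (g ` A)"
    using x(2) y by (simp add: orth_def)
qed

lemma id_in_orth_group: "id \<in> orth_group n"
  unfolding orth_group_def using fv.linear_id by (auto simp: bij_betw_def)

lemma orbit_eq_imp_act:
  assumes "orbit n x = orbit n y"
  obtains g where "g \<in> orth_group n" and "act g x = y"
proof -
  have "act id y = y"
    by (cases y) (simp add: act_def)
  then have "y \<in> orbit n x"
    using assms id_in_orth_group unfolding orbit_def by force
  then show ?thesis
    using that unfolding orbit_def by blast
qed

subsection \<open>A linear map fixing three lines of a pencil\<close>

lemma (in vector_space) independent_pair_coeffs_eq_0:
  assumes "independent {p, q}" and "p \<noteq> q" and "a *s p + b *s q = 0"
  shows "a = 0 \<and> b = 0"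
proof -
  let ?u = "\<lambda>v. if v = p then a else b"
  have sum0: "(\<Sum>v\<in>{p, q}. ?u v *s v) = 0"
    using assms(2,3) by simp
  have "\<forall>u. (\<Sum>v\<in>{p, q}. u v *s v) = 0 \<longrightarrow> (\<forall>v\<in>{p, q}. u v = 0)"
    using assms(1) by (auto simp: dependent_finite)
  from this[rule_format, OF sum0, of p] this[rule_format, OF sum0, of q] show ?thesis
    using assms(2) by simp
qed

text \<open>Invariance of the cross ratio of four lines in the plane spanned by \<open>p\<close> and \<open>q\<close>.\<close>

lemma (in vector_space) pencil_parameter_preserved:
  assumes lin: "Vector_Spaces.linear (*s) (*s) g"
    and indep: "independent {p, q}" "p \<noteq> q" and nz: "g p \<noteq> 0"
    and "g p \<in> span {p}" "g q \<in> span {q}" "g (p - q) \<in> span {p - q}"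
    and "g (s *s p + q) \<in> span {t *s p + q}"
  shows "s = t"
proof -
  interpret g: module_hom scale scale g
    using lin by (simp add: linear_iff_module_hom)
  obtain a b c d where a: "g p = a *s p" and b: "g q = b *s q" and c: "g (p - q) = c *s (p - q)"
    and d: "g (s *s p + q) = d *s (t *s p + q)"
    using assms(5-8) by (auto simp: span_singleton)
  have coeffs: "x = x' \<and> y = y'" if "x *s p + y *s q = x' *s p + y' *s q" for x y x' y'
    using independent_pair_coeffs_eq_0[OF indep, of "x - x'" "y - y'"] that
    by (simp add: algebra_simps)
  have "a *s p + (- b) *s q = c *s p + (- c) *s q"
    using c by (simp add: g.diff a b scale_right_diff_distrib)
  from coeffs[OF this] have "a = c" "b = c"
    by auto
  have "(s * a) *s p + b *s q = (d * t) *s p + d *s q"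
    using d by (simp add: g.add g.scale a b scale_right_distrib)
  from coeffs[OF this] have "s * a = d * t" "b = d"
    by auto
  moreover have "a \<noteq> 0"
    using nz a by auto
  ultimately show "s = t"
    using \<open>a = c\<close> \<open>b = c\<close> by (simp add: mult.commute)
qed

subsection \<open>The configuration\<close>

locale orbit_family =
  fixes n \<beta> i :: nat and gs :: "nat list"
  assumes beta_ge: "4 \<le> \<beta>" and beta_le: "\<beta> \<le> n - 2"
    and length_gs: "length gs = 4" and gs_pos: "0 \<notin> set gs" and sum_gs: "sum_list gs < n"
    and i_ge: "1 \<le> i" and i_le: "i \<le> 4" and gs_i: "2 \<le> gs ! (i - 1)"
begin

lemma n_eq: obtains N where "n = N + 6"
  using beta_ge beta_le that[of "n - 6"] by linarith

lemma n_ge_6: "6 \<le> n"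
  using beta_ge beta_le by linarith

text \<open>Indices are 0-based as in the definitions, so \<open>unit_vec j\<close> is \<open>e\<^sub>j\<^sub>+\<^sub>1\<close>.
  The space \<open>C\<^sub>k = flag_space t k\<close> is spanned by the first \<open>k\<close> of the vectors
  \<open>flag_vec1 t, \<dots>, flag_vec4\<close>, by \<open>extra_vec\<close> once \<open>i \<le> k\<close>, and by \<open>filler_count k\<close>
  basis vectors from the otherwise unused range \<open>e\<^sub>n\<^sub>+\<^sub>3, \<dots>, e\<^sub>2\<^sub>n\<^sub>-\<^sub>4\<close>, which pad
  its dimension to \<open>\<gamma>\<^sub>1 + \<dots> + \<gamma>\<^sub>k\<close>; \<open>\<gamma>\<^sub>i \<ge> 2\<close> leaves room for \<open>extra_vec\<close>.\<close>

abbreviation W :: "(nat \<Rightarrow> 'a::field) set" where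
  "W \<equiv> coord_space {..<n}"

abbreviation U :: "(nat \<Rightarrow> 'a::field) set" where
  "U \<equiv> coord_space {2*n-\<beta>..<2*n}"

definition flag_vec1 :: "'a::field \<Rightarrow> nat \<Rightarrow> 'a" where
  "flag_vec1 t = scl t (unit_vec 0) + unit_vec 2 + scl t (unit_vec (2*n-4)) + unit_vec n"

definition flag_vec2 :: "nat \<Rightarrow> 'a::field" where
  "flag_vec2 = unit_vec 2 + unit_vec (n-2) + unit_vec (2*n-4)"

definition flag_vec3 :: "nat \<Rightarrow> 'a::field" where
  "flag_vec3 = unit_vec 0 + unit_vec (2*n-2)"

definition flag_vec4 :: "nat \<Rightarrow> 'a::field" where
  "flag_vec4 = unit_vec (n-2) + unit_vec (2*n-2)"

definition extra_vec :: "nat \<Rightarrow> 'a::field" where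
  "extra_vec = unit_vec (2*n-1) - unit_vec 1 + unit_vec (n+1) - unit_vec 3"

definition filler_vec :: "nat \<Rightarrow> nat \<Rightarrow> 'a::field" where
  "filler_vec r = unit_vec (2*n-5-r)"

definition q_vec :: "nat \<Rightarrow> 'a::field" where
  "q_vec = unit_vec 2 + unit_vec (n-2)"

lemmas core_defs = flag_vec1_def flag_vec2_def flag_vec3_def flag_vec4_def extra_vec_def

definition filler_count :: "nat \<Rightarrow> nat" where
  "filler_count k = sum_list (take k gs) - k - (if i \<le> k then 1 else 0)"

definition flag_list :: "'a::field \<Rightarrow> nat \<Rightarrow> (nat \<Rightarrow> 'a) list" where
  "flag_list t k = take k [flag_vec1 t, flag_vec2, flag_vec3, flag_vec4]
     @ (if i \<le> k then [extra_vec] else []) @ map filler_vec [0..<filler_count k]"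

definition flag_space :: "'a::field \<Rightarrow> nat \<Rightarrow> (nat \<Rightarrow> 'a) set" where
  "flag_space t k = fv.span (set (flag_list t k))"

lemma gs_nth_ge: "k < 4 \<Longrightarrow> 1 + (if i = Suc k then 1 else 0) \<le> gs ! k"
  using gs_pos gs_i length_gs nth_mem[of k gs] by (cases "gs ! k") auto

lemma sum_take_gs_ge: "k \<le> 4 \<Longrightarrow> k + (if i \<le> k then 1 else 0) \<le> sum_list (take k gs)"
proof (induction k)
  case 0
  then show ?case using i_ge by simp
next
  case (Suc k)
  then show ?case
    using gs_nth_ge[of k] length_gs by (auto simp: take_Suc_conv_app_nth split: if_splits)
qed

lemma filler_count_Suc:
  "k < 4 \<Longrightarrow> filler_count (Suc k) = filler_count k + gs ! k - 1 - (if i = Suc k then 1 else 0)"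
  using sum_take_gs_ge[of k] sum_take_gs_ge[of "Suc k"] gs_nth_ge[of k] length_gs
  by (auto simp: filler_count_def take_Suc_conv_app_nth split: if_splits)

lemma filler_count_mono: "k \<le> k' \<Longrightarrow> k' \<le> 4 \<Longrightarrow> filler_count k \<le> filler_count k'"
proof (induction k' rule: dec_induct)
  case (step k')
  then show ?case
    using filler_count_Suc[of k'] gs_nth_ge[of k'] by auto
qed simp

lemma filler_count_le: "k \<le> 4 \<Longrightarrow> filler_count k \<le> n - 6"
  using filler_count_mono[of k 4] sum_gs length_gs by (simp add: filler_count_def i_le)

lemma length_flag_list:
  assumes "k \<le> 4"
  shows "length (flag_list t k) = sum_list (take k gs)"
proof -
  have "length (flag_list t k) = k + (if i \<le> k then 1 else 0) + filler_count k"
    using assms by (simp add: flag_list_def)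
  then show ?thesis
    using sum_take_gs_ge[OF assms] unfolding filler_count_def by (cases "i \<le> k") auto
qed

lemma echelon_flag_list_4: "echelon (flag_list t 4)"
proof -
  obtain N where n: "n = N + 6" using n_eq .
  let ?F = "map filler_vec [0..<filler_count 4] :: (nat \<Rightarrow> 'a) list"
  have F_le: "filler_count 4 \<le> n - 6"
    by (rule filler_count_le) simp
  have "?F = map unit_vec (map (\<lambda>r. 2*n-5-r) [0..<filler_count 4])"
    by (simp add: filler_vec_def)
  moreover have "distinct (map (\<lambda>r. 2*n-5-r) [0..<filler_count 4])"
    using F_le by (auto simp: distinct_map inj_on_def)
  ultimately have "echelon ?F"
    using echelon_unit_vecs by metis
  moreover have F_zero: "\<forall>y\<in>set ?F. y j = 0" if "j < n + 2 \<or> 2*n-4 \<le> j" for j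
    using that F_le by (auto simp: filler_vec_def)
  ultimately have "echelon (extra_vec # ?F)"
    by (intro echelon_ConsI[where k = "2*n-1"]) (unfold extra_vec_def, auto simp: n)
  then have "echelon (flag_vec4 # extra_vec # ?F)"
    by (rule echelon_ConsI[where k = "n-2", rotated 2])
      (unfold core_defs, use F_zero in \<open>auto simp: n scl_apply\<close>)
  then have "echelon (flag_vec3 # flag_vec4 # extra_vec # ?F)"
    by (rule echelon_ConsI[where k = 0, rotated 2])
      (unfold core_defs, use F_zero in \<open>auto simp: n scl_apply\<close>)
  then have "echelon (flag_vec2 # flag_vec3 # flag_vec4 # extra_vec # ?F)"
    by (rule echelon_ConsI[where k = 2, rotated 2])
      (unfold core_defs, use F_zero in \<open>auto simp: n scl_apply\<close>)
  then have "echelon (flag_vec1 t # flag_vec2 # flag_vec3 # flag_vec4 # extra_vec # ?F)"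
    by (rule echelon_ConsI[where k = n, rotated 2])
      (unfold core_defs, use F_zero in \<open>auto simp: n scl_apply\<close>)
  then show ?thesis
    using i_le by (simp add: flag_list_def)
qed

lemma subseq_flag_list: "k \<le> 4 \<Longrightarrow> subseq (flag_list t k) (flag_list t 4)"
proof -
  assume k: "k \<le> 4"
  have "map filler_vec [0..<filler_count k] = take (filler_count k) (map filler_vec [0..<filler_count 4])"
    using filler_count_mono[OF k] by (simp add: take_map)
  then have "subseq (map filler_vec [0..<filler_count k]) (map filler_vec [0..<filler_count 4])"
    by (metis prefix_imp_subseq take_is_prefix)
  then show ?thesis
    unfolding flag_list_def using i_le
    by (intro list_emb_append_mono) (auto intro: take_is_prefix)
qed

lemma dim_flag_space: "k \<le> 4 \<Longrightarrow> sdim (flag_space t k) = sum_list (take k gs)"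
  unfolding flag_space_def
  using span_echelon_dim echelon_subseq[OF subseq_flag_list echelon_flag_list_4] length_flag_list
  by metis

lemma set_flag_list_4:
  "set (flag_list t 4) = {flag_vec1 t, flag_vec2, flag_vec3, flag_vec4, extra_vec}
     \<union> filler_vec ` {..<filler_count 4}"
  using i_le by (auto simp: flag_list_def lessThan_atLeast0)

lemma set_flag_list_mono:
  assumes "k \<le> k'" and "k' \<le> 4"
  shows "set (flag_list t k) \<subseteq> set (flag_list t k')"
proof -
  have "set (take k [flag_vec1 t, flag_vec2, flag_vec3, flag_vec4])
      \<subseteq> set (take k' [flag_vec1 t, flag_vec2, flag_vec3, flag_vec4])"
    using assms(1) by (rule set_take_subset_set_take)
  then show ?thesis
    using assms filler_count_mono[OF assms] by (auto simp: flag_list_def)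
qed

lemma flag_space_mono: "k \<le> k' \<Longrightarrow> k' \<le> 4 \<Longrightarrow> flag_space t k \<subseteq> flag_space t k'"
  unfolding flag_space_def by (intro fv.span_mono set_flag_list_mono)

lemma flag_vec_mem_flag_space:
  "flag_vec1 t \<in> flag_space t 1" "flag_vec2 \<in> flag_space t 2" "flag_vec3 \<in> flag_space t 3"
  "flag_vec4 \<in> flag_space t 4" "extra_vec \<in> flag_space t i"
  unfolding flag_space_def by (auto intro: fv.span_base simp: flag_list_def numeral_eq_Suc)

lemma flag_list_Vsp: "set (flag_list t 4) \<subseteq> Vsp n"
proof -
  obtain N where n: "n = N + 6" using n_eq .
  have "filler_vec r \<in> Vsp n" for r :: nat
    unfolding filler_vec_def Vsp_def by (simp add: n)
  moreover have "{flag_vec1 t, flag_vec2, flag_vec3, flag_vec4, extra_vec} \<subseteq> Vsp n"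
    unfolding Vsp_def core_defs by (auto simp: n scl_apply)
  ultimately show ?thesis
    unfolding set_flag_list_4 by blast
qed

lemma flag_space_Vsp: "k \<le> 4 \<Longrightarrow> flag_space t k \<subseteq> Vsp n"
  unfolding flag_space_def Vsp_eq_coord_space
  using flag_list_Vsp set_flag_list_mono[of k 4]
  by (intro fv.span_minimal subspace_coord_space) (auto simp: Vsp_eq_coord_space)

lemma is_subspace_flag_space: "k \<le> 4 \<Longrightarrow> is_subspace n (flag_space t k)"
  using flag_space_Vsp by (simp add: is_subspace_def flag_space_def)

lemma bform_flag_vecs:
  "bform n (flag_vec1 t) y = t * y (2*n-1) + y (2*n-3) + t * y 3 + y (n-1)"
  "bform n flag_vec2 y = y (2*n-3) + y (n+1) + y 3"
  "bform n flag_vec3 y = y (2*n-1) + y 1"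
  "bform n flag_vec4 y = y (n+1) + y 1"
  "bform n extra_vec y = y 0 - y (2*n-2) + y (n-2) - y (2*n-4)"
  "bform n q_vec y = y (2*n-3) + y (n+1)"
  "r < n - 6 \<Longrightarrow> bform n (filler_vec r) y = y (r+4)"
proof -
  obtain N where n: "n = N + 6" using n_eq .
  show "bform n (flag_vec1 t) y = t * y (2*n-1) + y (2*n-3) + t * y 3 + y (n-1)"
    unfolding flag_vec1_def
    by (simp add: n bform_add_left bform_scl_left bform_unit_vec_left algebra_simps)
  show "bform n flag_vec2 y = y (2*n-3) + y (n+1) + y 3"
    unfolding flag_vec2_def by (simp add: n bform_add_left bform_unit_vec_left algebra_simps)
  show "bform n flag_vec3 y = y (2*n-1) + y 1"
    unfolding flag_vec3_def by (simp add: n bform_add_left bform_unit_vec_left algebra_simps)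
  show "bform n flag_vec4 y = y (n+1) + y 1"
    unfolding flag_vec4_def by (simp add: n bform_add_left bform_unit_vec_left algebra_simps)
  show "bform n extra_vec y = y 0 - y (2*n-2) + y (n-2) - y (2*n-4)"
    unfolding extra_vec_def
    by (simp add: n bform_add_left bform_diff_left bform_unit_vec_left algebra_simps)
  show "bform n q_vec y = y (2*n-3) + y (n+1)"
    unfolding q_vec_def by (simp add: n bform_add_left bform_unit_vec_left algebra_simps)
  show "bform n (filler_vec r) y = y (r+4)" if "r < n - 6"
    using that unfolding filler_vec_def by (simp add: n bform_unit_vec_left add.commute)
qed

lemma filler_vec_eq_0: "r < n - 6 \<Longrightarrow> j < n + 2 \<or> 2*n-4 \<le> j \<Longrightarrow> filler_vec r j = 0"
  by (auto simp: filler_vec_def)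

lemma flag_list_gap:
  assumes y: "y \<in> set (flag_list t 4)" and j: "4 \<le> j" "j \<le> n - 3"
  shows "y j = 0"
proof -
  have "filler_count 4 \<le> n - 6"
    by (rule filler_count_le) simp
  then have "filler_vec r j = 0" if "r < filler_count 4" for r
    using that j by (intro filler_vec_eq_0) auto
  then show ?thesis
    using y j n_ge_6 unfolding set_flag_list_4 core_defs by (auto simp: scl_apply)
qed

lemma flag_list_orthogonal:
  assumes x: "x \<in> set (flag_list t 4)" and y: "y \<in> set (flag_list t 4)"
  shows "bform n x y = 0"
proof -
  obtain N where n: "n = N + 6" using n_eq .
  have F_le: "filler_count 4 \<le> n - 6"
    by (rule filler_count_le) simp
  have filler: "bform n (filler_vec r) z = 0" if "r < filler_count 4" "z \<in> set (flag_list t 4)" for r z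
    using that F_le bform_flag_vecs(7)[of r z] flag_list_gap[of z t "r + 4"] by simp
  consider (core) "x \<in> {flag_vec1 t, flag_vec2, flag_vec3, flag_vec4, extra_vec}"
      "y \<in> {flag_vec1 t, flag_vec2, flag_vec3, flag_vec4, extra_vec}"
    | (filler_left) r where "r < filler_count 4" "x = filler_vec r"
    | (filler_right) r where "r < filler_count 4" "y = filler_vec r"
    using x y unfolding set_flag_list_4 by blast
  then show ?thesis
  proof cases
    case core
    then show ?thesis
      by (elim insertE emptyE; simp only: bform_flag_vecs; unfold core_defs; simp add: n scl_apply)
  next
    case filler_left
    then show ?thesis using filler y by simp
  next
    case filler_right
    then show ?thesis using filler x bform_sym by metis
  qed
qed

lemma isotropic_flag_space: "isotropic n (flag_space t 4)"
  unfolding flag_space_def by (rule isotropic_span) (use flag_list_orthogonal in blast)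

lemma isotropic_W: "isotropic n W"
  by (rule isotropic_coord_space) auto

lemma isotropic_U: "isotropic n U"
  using beta_le by (intro isotropic_coord_space) auto

definition config :: "'a::field \<Rightarrow> (nat \<Rightarrow> 'a) set list \<times> (nat \<Rightarrow> 'a) set list \<times> (nat \<Rightarrow> 'a) set list"
  where "config t = ([W], [U], map (flag_space t) [1..<5])"

lemma config_in_triple_space: "config t \<in> triple_space n [n] [\<beta>] gs"
proof -
  have W_flag: "[W] \<in> flags n [n]"
    using isotropic_W dim_coord_space[of "{..<n}"] coord_space_mono[of "{..<n}" "{..<2*n}"]
    by (simp add: flags_def is_subspace_def subspace_coord_space Vsp_eq_coord_space)
  have U_sub: "{2*n-\<beta>..<2*n} \<subseteq> {..<2*n}"
    by auto
  have U_flag: "[U] \<in> flags n [\<beta>]"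
    using isotropic_U dim_coord_space[of "{2*n-\<beta>..<2*n}"] beta_le coord_space_mono[OF U_sub]
    by (simp add: flags_def is_subspace_def subspace_coord_space Vsp_eq_coord_space)
  have C_flag: "map (flag_space t) [1..<5] \<in> flags n gs"
    unfolding flags_def
  proof (intro CollectI conjI allI impI)
    fix j assume "j < length gs"
    then have j: "Suc j \<le> 4" and "map (flag_space t) [1..<5] ! j = flag_space t (Suc j)"
      using length_gs by simp_all
    then show "is_subspace n (map (flag_space t) [1..<5] ! j)"
      and "sdim (map (flag_space t) [1..<5] ! j) = sum_list (take (Suc j) gs)"
      using is_subspace_flag_space[OF j] dim_flag_space[OF j] by simp_all
  next
    fix j assume "Suc j < length gs"
    then show "map (flag_space t) [1..<5] ! j \<subseteq> map (flag_space t) [1..<5] ! Suc j"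
      using length_gs flag_space_mono[of "Suc j" "Suc (Suc j)"] by simp
  next
    have "last (map (flag_space t) [1..<5]) = flag_space t 4"
      by (simp add: upt_rec numeral_eq_Suc)
    then show "isotropic n (last (map (flag_space t) [1..<5]))"
      using isotropic_flag_space by simp
  qed (simp add: length_gs)
  show ?thesis
    using W_flag U_flag C_flag by (simp add: config_def triple_space_def)
qed

text \<open>Linear equations satisfied by every vector of \<open>C\<^sub>k\<close> (they do not cut it out).\<close>

definition flag_eqns :: "'a::field \<Rightarrow> nat \<Rightarrow> (nat \<Rightarrow> 'a) \<Rightarrow> bool" where
  "flag_eqns t k c \<longleftrightarrow> c 1 = - c (n+1) \<and> c 3 = - c (n+1) \<and> c (n-1) = 0
     \<and> (\<forall>j. 4 \<le> j \<and> j < n-2 \<longrightarrow> c j = 0) \<and> c (2*n-4) = t * c n + c 2 - c n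
     \<and> (k \<le> 3 \<longrightarrow> c (n-2) = c 2 - c n) \<and> (k \<le> 2 \<longrightarrow> c 0 = t * c n) \<and> (k \<le> 1 \<longrightarrow> c 2 = c n)"

lemma subspace_flag_eqns: "fv.subspace {c. flag_eqns t k c}"
proof -
  have "flag_eqns t k (x + y)" if "flag_eqns t k x" "flag_eqns t k y" for x y
    using that unfolding flag_eqns_def by clarsimp (simp add: algebra_simps)
  moreover have "flag_eqns t k (scl a x)" if "flag_eqns t k x" for a x
    using that unfolding flag_eqns_def by (clarsimp simp: scl_apply) (simp add: algebra_simps)
  moreover have "flag_eqns t k 0"
    by (simp add: flag_eqns_def)
  ultimately show ?thesis
    by (auto simp: fv.subspace_def)
qed

lemma flag_eqns_mono: "flag_eqns t k c \<Longrightarrow> k \<le> k' \<Longrightarrow> flag_eqns t k' c"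
  by (auto simp: flag_eqns_def)

lemma flag_vecs_eqns:
  "flag_eqns t 1 (flag_vec1 t)" "flag_eqns t 2 flag_vec2" "flag_eqns t 3 flag_vec3"
  "flag_eqns t 4 flag_vec4" "flag_eqns t 0 extra_vec" "r < n - 6 \<Longrightarrow> flag_eqns t 0 (filler_vec r)"
proof -
  obtain N where n: "n = N + 6" using n_eq .
  show "flag_eqns t 1 (flag_vec1 t)" "flag_eqns t 2 flag_vec2" "flag_eqns t 3 flag_vec3"
    "flag_eqns t 4 flag_vec4" "flag_eqns t 0 extra_vec"
    unfolding flag_eqns_def core_defs by (auto simp: n scl_apply)
  show "flag_eqns t 0 (filler_vec r)" if "r < n - 6"
    using that unfolding flag_eqns_def filler_vec_def by (auto simp: n)
qed

lemma flag_list_eqns: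
  assumes k: "k \<le> 4" and x: "x \<in> set (flag_list t k)"
  shows "flag_eqns t k x"
proof -
  let ?core = "[flag_vec1 t, flag_vec2, flag_vec3, flag_vec4]"
  consider (core) "x \<in> set (take k ?core)" | (extra) "i \<le> k" "x = extra_vec"
    | (filler) r where "r < filler_count k" "x = filler_vec r"
    using x by (auto simp: flag_list_def split: if_splits)
  then show ?thesis
  proof cases
    case core
    then obtain l where l: "l < k" "l < 4" "x = ?core ! l"
      by (auto simp: in_set_conv_nth)
    then have "l = 0 \<or> l = 1 \<or> l = 2 \<or> l = 3"
      by linarith
    then have "flag_eqns t (l + 1) (?core ! l)"
      using flag_vecs_eqns(1-4) by (auto simp: numeral_eq_Suc)
    moreover have "l + 1 \<le> k"
      using l by simp
    ultimately show ?thesis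
      using l(3) flag_eqns_mono by blast
  next
    case extra
    then show ?thesis
      using flag_eqns_mono[OF flag_vecs_eqns(5), of k] by simp
  next
    case filler
    then have "r < n - 6"
      using filler_count_le[OF k] by linarith
    then show ?thesis
      using filler flag_eqns_mono[OF flag_vecs_eqns(6), of r k] by simp
  qed
qed

lemma flag_space_eqns: "k \<le> 4 \<Longrightarrow> c \<in> flag_space t k \<Longrightarrow> flag_eqns t k c"
  using fv.span_minimal[OF _ subspace_flag_eqns] flag_list_eqns
  unfolding flag_space_def by blast

lemma orth_U: "orth n U = {x \<in> Vsp n. \<forall>j<\<beta>. x j = 0}"
proof -
  have "{2*n-\<beta>..<2*n} \<subseteq> {..<2*n}"
    by auto
  moreover have "(\<forall>m\<in>{2*n-\<beta>..<2*n}. x (2*n-1-m) = 0) \<longleftrightarrow> (\<forall>j<\<beta>. x j = 0)" for x :: "nat \<Rightarrow> 'a"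
  proof
    assume zero: "\<forall>m\<in>{2*n-\<beta>..<2*n}. x (2*n-1-m) = 0"
    show "\<forall>j<\<beta>. x j = 0"
    proof (intro allI impI)
      fix j assume "j < \<beta>"
      then have "2*n-1-j \<in> {2*n-\<beta>..<2*n}" and "2*n-1-(2*n-1-j) = j"
        using beta_le by auto
      then show "x j = 0"
        using zero by metis
    qed
  next
    assume "\<forall>j<\<beta>. x j = 0"
    then show "\<forall>m\<in>{2*n-\<beta>..<2*n}. x (2*n-1-m) = 0"
      by auto
  qed
  ultimately show ?thesis
    by (simp add: orth_coord_space)
qed

definition pencil :: "'a::field \<Rightarrow> (nat \<Rightarrow> 'a) set" where
  "pencil t = W \<inter> (flag_space t 3 + U)"

lemma pencil_decomp:
  assumes y: "y \<in> W" and c: "c \<in> flag_space t k" "k \<le> 3" and u: "u \<in> U" and yc: "y = c + u"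
  shows "y = scl (y 0) (unit_vec 0) + scl (y 2) q_vec" and "y 0 = c 0" and "c n = 0"
proof -
  have eqns: "flag_eqns t k c"
    using c by (intro flag_space_eqns) auto
  have low: "y j = c j" if "j < n + 2" for j
  proof -
    have "j < 2*n - \<beta>"
      using that beta_le n_ge_6 by arith
    then show ?thesis
      using u yc by (simp add: coord_space_def)
  qed
  have high: "y j = 0" if "n \<le> j" for j
    using y that by (simp add: coord_space_def)
  have cn: "c n = 0" "c (n+1) = 0"
    using low[of n] low[of "n+1"] high[of n] high[of "n+1"] by simp_all
  have c_zero: "c j = 0" if "j < n" "j \<noteq> 0" "j \<noteq> 2" "j \<noteq> n-2" for j
  proof -
    have "j = 1 \<or> j = 3 \<or> j = n-1 \<or> (4 \<le> j \<and> j < n-2)"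
      using that by linarith
    then show ?thesis
      using eqns cn unfolding flag_eqns_def by auto
  qed
  have c_n2: "c (n-2) = c 2"
    using eqns cn c(2) by (simp add: flag_eqns_def)
  have y0: "y 0 = c 0" and y2: "y 2 = c 2"
    using n_ge_6 by (intro low, simp)+
  have "y j = (scl (y 0) (unit_vec 0) + scl (y 2) q_vec) j" for j
    unfolding y0 y2 using n_ge_6 low[of j] high[of j] c_zero[of j] c_n2
    by (cases "n \<le> j") (auto simp: q_vec_def scl_apply)
  then show "y = scl (y 0) (unit_vec 0) + scl (y 2) q_vec"
    by (rule ext)
  show "y 0 = c 0"
    by (fact y0)
  show "c n = 0"
    by (fact cn(1))
qed

lemma pencil_coords:
  assumes "y \<in> pencil t"
  shows "y = scl (y 0) (unit_vec 0) + scl (y 2) q_vec"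
proof -
  obtain c u where y: "y \<in> W" and c: "c \<in> flag_space t 3" and u: "u \<in> U" and yc: "y = c + u"
    using assms by (auto simp: pencil_def elim: set_plus_elim)
  show ?thesis
    by (rule pencil_decomp(1)[OF y c _ u yc]) simp
qed

lemma orth_U_low: "r \<in> orth n U \<Longrightarrow> j < \<beta> \<Longrightarrow> r j = 0"
  by (simp add: orth_U)

lemma unit_vec_in_W: "j < n \<Longrightarrow> unit_vec j \<in> W"
  by (simp add: coord_space_def)

lemma unit_vec_in_U: "2*n - \<beta> \<le> j \<Longrightarrow> j < 2*n \<Longrightarrow> unit_vec j \<in> U"
  by (simp add: coord_space_def)

lemma unit_vec_in_orth_U: "\<beta> \<le> j \<Longrightarrow> j < 2*n \<Longrightarrow> unit_vec j \<in> orth n U"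
  by (simp add: orth_U Vsp_def)

lemma line_q_subset: "W \<inter> (flag_space t 2 + U) \<subseteq> fv.span {q_vec}"
proof
  fix y assume "y \<in> W \<inter> (flag_space t 2 + U)"
  then obtain c u where y: "y \<in> W" and c: "c \<in> flag_space t 2" and u: "u \<in> U" and yc: "y = c + u"
    by (auto elim: set_plus_elim)
  have "flag_eqns t 2 c"
    using c by (intro flag_space_eqns) auto
  then have y0: "y 0 = 0"
    using pencil_decomp(2,3)[OF y c _ u yc] by (simp add: flag_eqns_def)
  have coords: "y = scl (y 0) (unit_vec 0) + scl (y 2) q_vec"
    by (rule pencil_decomp(1)[OF y c _ u yc]) simp
  have "y = scl (y 2) q_vec"
    by (subst coords) (simp add: y0 fun_eq_iff scl_apply)
  then show "y \<in> fv.span {q_vec}"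
    by (auto simp: fv.span_singleton)
qed

lemma line_e0_minus_q_subset: "pencil t \<inter> orth n (flag_space t i) \<subseteq> fv.span {unit_vec 0 - q_vec}"
proof
  fix y assume y: "y \<in> pencil t \<inter> orth n (flag_space t i)"
  then have coords: "y = scl (y 0) (unit_vec 0) + scl (y 2) q_vec"
    using pencil_coords by blast
  have "bform n y extra_vec = 0"
    using y flag_vec_mem_flag_space(5) by (auto simp: orth_def)
  then have "bform n extra_vec y = 0"
    using bform_sym[of n extra_vec y] by simp
  moreover have "y (2*n-2) = 0" "y (2*n-4) = 0"
    using y n_ge_6 by (auto simp: pencil_def coord_space_def)
  moreover have "y (n-2) = y 2"
  proof -
    have "n - 2 \<noteq> 0" "n - 2 \<noteq> 2"
      using n_ge_6 by arith+
    then show ?thesis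
      using fun_cong[OF coords, of "n-2"] by (simp add: q_vec_def scl_apply)
  qed
  ultimately have "y 2 = - y 0"
    by (simp add: bform_flag_vecs eq_neg_iff_add_eq_0 add.commute)
  then have "y = scl (y 0) (unit_vec 0 - q_vec)"
    by (subst coords) (simp add: fun_eq_iff scl_apply algebra_simps)
  then show "y \<in> fv.span {unit_vec 0 - q_vec}"
    by (auto simp: fv.span_singleton)
qed

lemma line_param_subset:
  "pencil t \<inter> (flag_space t 1 + orth n U) \<subseteq> fv.span {scl t (unit_vec 0) + q_vec}"
proof
  fix y assume y: "y \<in> pencil t \<inter> (flag_space t 1 + orth n U)"
  then have coords: "y = scl (y 0) (unit_vec 0) + scl (y 2) q_vec"
    using pencil_coords by blast
  from y obtain c r where c: "c \<in> flag_space t 1" and r: "r \<in> orth n U" and yc: "y = c + r"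
    by (auto elim: set_plus_elim)
  have "flag_eqns t 1 c"
    using c by (intro flag_space_eqns) auto
  moreover have "y 0 = c 0" "y 2 = c 2"
    using yc orth_U_low[OF r] beta_ge by auto
  ultimately have "y 0 = t * c n" "y 2 = c n"
    by (auto simp: flag_eqns_def)
  then have "y = scl (c n) (scl t (unit_vec 0) + q_vec)"
    by (subst coords) (simp add: fun_eq_iff scl_apply algebra_simps)
  then show "y \<in> fv.span {scl t (unit_vec 0) + q_vec}"
    by (auto simp: fv.span_singleton)
qed

lemma line_e0_subset: "pencil t \<inter> (W \<inter> flag_space t 4 + orth n U) \<subseteq> fv.span {unit_vec 0}"
proof
  fix y assume y: "y \<in> pencil t \<inter> (W \<inter> flag_space t 4 + orth n U)"
  then have coords: "y = scl (y 0) (unit_vec 0) + scl (y 2) q_vec"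
    using pencil_coords by blast
  from y obtain z r where z: "z \<in> W" "z \<in> flag_space t 4" and r: "r \<in> orth n U"
    and yz: "y = z + r"
    by (auto elim: set_plus_elim)
  have "flag_eqns t 4 z"
    using z(2) by (intro flag_space_eqns) auto
  moreover have "z n = 0" "z (2*n-4) = 0"
    using z(1) n_ge_6 by (auto simp: coord_space_def)
  ultimately have "z 2 = 0"
    by (simp add: flag_eqns_def)
  then have "y 2 = 0"
    using yz orth_U_low[OF r, of 2] beta_ge by simp
  then have "y = scl (y 0) (unit_vec 0)"
    by (subst coords) (simp add: fun_eq_iff scl_apply)
  then show "y \<in> fv.span {unit_vec 0}"
    by (auto simp: fv.span_singleton)
qed

lemma bform_e0_minus_q_flag_list_eq_0:
  assumes y: "y \<in> set (flag_list t 4)"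
  shows "bform n (unit_vec 0 - q_vec) y = 0"
proof -
  have form: "bform n (unit_vec 0 - q_vec) y = y (2*n-1) - (y (2*n-3) + y (n+1))"
    using n_ge_6 by (simp add: bform_diff_left bform_unit_vec_left bform_flag_vecs(6))
  consider "y \<in> {flag_vec1 t, flag_vec2, flag_vec3, flag_vec4, extra_vec}"
    | r where "r < filler_count 4" "y = filler_vec r"
    using y unfolding set_flag_list_4 by blast
  then show ?thesis
  proof cases
    case 1
    obtain N where n: "n = N + 6" using n_eq .
    from 1 show ?thesis
      unfolding form core_defs by (auto simp: n scl_apply)
  next
    case 2
    obtain N where n: "n = N + 6" using n_eq .
    have "filler_count 4 \<le> n - 6"
      by (rule filler_count_le) simp
    with 2 show ?thesis
      unfolding form filler_vec_def by (auto simp: n)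
  qed
qed

lemma flag_space_add: "a \<in> flag_space t k \<Longrightarrow> b \<in> flag_space t k \<Longrightarrow> a + b \<in> flag_space t k"
  and flag_space_diff: "a \<in> flag_space t k \<Longrightarrow> b \<in> flag_space t k \<Longrightarrow> a - b \<in> flag_space t k"
  and flag_space_scl: "a \<in> flag_space t k \<Longrightarrow> scl c a \<in> flag_space t k"
  unfolding flag_space_def by (auto intro: fv.span_add fv.span_diff fv.span_scale)

lemma orth_U_diff: "a \<in> orth n U \<Longrightarrow> b \<in> orth n U \<Longrightarrow> a - b \<in> orth n U"
  and orth_U_scl: "a \<in> orth n U \<Longrightarrow> scl c a \<in> orth n U"
  by (auto simp: orth_U Vsp_def scl_apply)

lemma flag_vec2_mem_flag_space_3: "flag_vec2 \<in> flag_space t 3"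
  and flag_vec3_mem_flag_space_4: "flag_vec3 \<in> flag_space t 4"
  using flag_vec_mem_flag_space(2,3) flag_space_mono[of 2 3 t] flag_space_mono[of 3 4 t] by auto

lemma unit_vecs_in_U: "unit_vec (2*n-4) \<in> U" "unit_vec (2*n-2) \<in> U"
  using beta_ge n_ge_6 by (auto intro: unit_vec_in_U)

lemma vecs_in_W: "unit_vec 0 \<in> W" "q_vec \<in> W" "unit_vec 0 - q_vec \<in> W" "scl s (unit_vec 0) + q_vec \<in> W"
  "unit_vec 0 - unit_vec (n-2) \<in> W"
proof -
  have "unit_vec 0 \<in> W" "unit_vec 2 \<in> W" "unit_vec (n-2) \<in> W"
    using n_ge_6 by (auto intro: unit_vec_in_W)
  then show "unit_vec 0 \<in> W" "q_vec \<in> W" "unit_vec 0 - q_vec \<in> W" "scl s (unit_vec 0) + q_vec \<in> W"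
    "unit_vec 0 - unit_vec (n-2) \<in> W"
    unfolding q_vec_def by (auto intro: coord_space_add coord_space_diff coord_space_scl)
qed

lemma line_q_mem: "q_vec \<in> W \<inter> (flag_space s 2 + U)"
proof -
  have "q_vec = flag_vec2 + - unit_vec (2*n-4)"
    unfolding q_vec_def flag_vec2_def by (simp add: fun_eq_iff)
  moreover have "flag_vec2 + - unit_vec (2*n-4) \<in> flag_space s 2 + U"
    by (intro set_plus_intro flag_vec_mem_flag_space coord_space_uminus unit_vecs_in_U)
  ultimately show ?thesis
    using vecs_in_W(2) by (metis IntI)
qed

lemma line_e0_minus_q_mem: "unit_vec 0 - q_vec \<in> pencil s \<inter> orth n (flag_space s i)"
proof -
  obtain N where n: "n = N + 6" using n_eq .
  have "unit_vec 0 - q_vec = (flag_vec3 - flag_vec2) + (unit_vec (2*n-4) - unit_vec (2*n-2))"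
    unfolding q_vec_def core_defs by (simp add: fun_eq_iff n)
  also have "\<dots> \<in> flag_space s 3 + U"
    by (intro set_plus_intro flag_space_diff flag_vec_mem_flag_space flag_vec2_mem_flag_space_3
        coord_space_diff unit_vecs_in_U)
  finally have "unit_vec 0 - q_vec \<in> pencil s"
    unfolding pencil_def using vecs_in_W(3) by blast
  moreover have "set (flag_list s i) \<subseteq> set (flag_list s 4)"
    using i_le by (rule set_flag_list_mono) simp
  then have "\<forall>a\<in>flag_space s i. bform n (unit_vec 0 - q_vec) a = 0"
    unfolding flag_space_def using bform_e0_minus_q_flag_list_eq_0 bform_span_right_eq_0 by blast
  moreover have "unit_vec 0 - q_vec \<in> Vsp n"
    using vecs_in_W(3) coord_space_mono[of "{..<n}" "{..<2*n}"] by (auto simp: Vsp_eq_coord_space)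
  ultimately show ?thesis
    by (simp add: orth_def)
qed

lemma line_param_mem: "scl s (unit_vec 0) + q_vec \<in> pencil s \<inter> (flag_space s 1 + orth n U)"
proof -
  obtain N where n: "n = N + 6" using n_eq .
  have "scl s (unit_vec 0) + q_vec
      = (scl s flag_vec3 + flag_vec2) + - (scl s (unit_vec (2*n-2)) + unit_vec (2*n-4))"
    unfolding q_vec_def core_defs by (simp add: fun_eq_iff n scl_apply)
  moreover have "(scl s flag_vec3 + flag_vec2) + - (scl s (unit_vec (2*n-2)) + unit_vec (2*n-4))
      \<in> flag_space s 3 + U"
    by (intro set_plus_intro flag_space_add flag_space_scl flag_vec_mem_flag_space
        flag_vec2_mem_flag_space_3 coord_space_uminus coord_space_add coord_space_scl unit_vecs_in_U)
  moreover have "scl s (unit_vec 0) + q_vec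
      = flag_vec1 s + (unit_vec (n-2) - scl s (unit_vec (2*n-4)) - unit_vec n)"
    unfolding q_vec_def core_defs by (simp add: fun_eq_iff n scl_apply)
  moreover have "unit_vec (n-2) \<in> orth n U" "unit_vec n \<in> orth n U" "unit_vec (2*n-4) \<in> orth n U"
    using beta_le n_ge_6 by (auto intro: unit_vec_in_orth_U)
  then have "flag_vec1 s + (unit_vec (n-2) - scl s (unit_vec (2*n-4)) - unit_vec n)
      \<in> flag_space s 1 + orth n U"
    by (intro set_plus_intro flag_vec_mem_flag_space orth_U_diff orth_U_scl)
  ultimately show ?thesis
    unfolding pencil_def using vecs_in_W(4) by (metis IntI)
qed

lemma line_e0_mem: "unit_vec 0 \<in> pencil s \<inter> (W \<inter> flag_space s 4 + orth n U)"
proof -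
  obtain N where n: "n = N + 6" using n_eq .
  have "unit_vec 0 = flag_vec3 + - unit_vec (2*n-2)"
    unfolding core_defs by (simp add: fun_eq_iff n)
  also have "\<dots> \<in> flag_space s 3 + U"
    by (intro set_plus_intro flag_vec_mem_flag_space coord_space_uminus unit_vecs_in_U)
  finally have "unit_vec 0 \<in> pencil s"
    unfolding pencil_def using vecs_in_W(1) by blast
  moreover have "flag_vec3 - flag_vec4 = unit_vec 0 - unit_vec (n-2)"
    unfolding core_defs by (simp add: fun_eq_iff n)
  then have "flag_vec3 - flag_vec4 \<in> W \<inter> flag_space s 4"
    using vecs_in_W(5) flag_space_diff[OF flag_vec3_mem_flag_space_4 flag_vec_mem_flag_space(4)]
    by (metis IntI)
  moreover have "unit_vec (n-2) \<in> orth n U"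
    using beta_le n_ge_6 by (intro unit_vec_in_orth_U) auto
  moreover have "unit_vec 0 = (flag_vec3 - flag_vec4) + unit_vec (n-2)"
    unfolding core_defs by (simp add: fun_eq_iff n)
  ultimately show ?thesis
    by (metis IntI set_plus_intro)
qed

lemma orth_group_image_pencil:
  assumes g: "g \<in> orth_group n" and "g ` W = W" "g ` U = U" "g ` flag_space s 3 = flag_space t 3"
  shows "g ` pencil s \<subseteq> pencil t"
proof -
  have "g ` pencil s \<subseteq> g ` W \<inter> g ` (flag_space s 3 + U)"
    unfolding pencil_def by (rule image_Int_subset)
  also have "\<dots> = pencil t"
    using assms by (simp add: pencil_def orth_group_image_set_plus[OF g])
  finally show ?thesis .
qed

lemma orth_group_image_orth_U:
  assumes g: "g \<in> orth_group n" and gU: "g ` U = U"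
  shows "g ` orth n U \<subseteq> orth n U"
proof -
  have "{2*n-\<beta>..<2*n} \<subseteq> {..<2*n}"
    by auto
  then have "U \<subseteq> Vsp n"
    unfolding Vsp_eq_coord_space by (rule coord_space_mono)
  from orth_group_image_orth[OF g this] show ?thesis
    unfolding gU .
qed

lemma orth_group_maps_pencil_lines:
  assumes g: "g \<in> orth_group n" and gW: "g ` W = W" and gU: "g ` U = U"
    and gC: "\<forall>k\<in>{1..4}. g ` flag_space s k = flag_space t k"
  shows "g ` (W \<inter> (flag_space s 2 + U)) \<subseteq> W \<inter> (flag_space t 2 + U)"
    and "g ` (pencil s \<inter> orth n (flag_space s i)) \<subseteq> pencil t \<inter> orth n (flag_space t i)"
    and "g ` (pencil s \<inter> (flag_space s 1 + orth n U)) \<subseteq> pencil t \<inter> (flag_space t 1 + orth n U)"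
    and "g ` (pencil s \<inter> (W \<inter> flag_space s 4 + orth n U))
      \<subseteq> pencil t \<inter> (W \<inter> flag_space t 4 + orth n U)"
proof -
  note plus = orth_group_image_set_plus[OF g]
  have C: "g ` flag_space s 1 = flag_space t 1" "g ` flag_space s 2 = flag_space t 2"
    "g ` flag_space s 3 = flag_space t 3" "g ` flag_space s 4 = flag_space t 4"
    using gC by auto
  have pencil: "g ` pencil s \<subseteq> pencil t"
    using orth_group_image_pencil[OF g gW gU C(3)] .
  have orth_U: "g ` orth n U \<subseteq> orth n U"
    using orth_group_image_orth_U[OF g gU] .
  have "g ` orth n (flag_space s i) \<subseteq> orth n (g ` flag_space s i)"
    using i_le by (intro orth_group_image_orth[OF g flag_space_Vsp])
  then have orth_C: "g ` orth n (flag_space s i) \<subseteq> orth n (flag_space t i)"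
    using gC i_ge i_le by simp
  have "g ` (W \<inter> (flag_space s 2 + U)) \<subseteq> g ` W \<inter> g ` (flag_space s 2 + U)"
    by (rule image_Int_subset)
  also have "\<dots> = W \<inter> (flag_space t 2 + U)"
    by (simp add: plus gW gU C)
  finally show "g ` (W \<inter> (flag_space s 2 + U)) \<subseteq> W \<inter> (flag_space t 2 + U)" .
  show "g ` (pencil s \<inter> orth n (flag_space s i)) \<subseteq> pencil t \<inter> orth n (flag_space t i)"
    using image_Int_subset[of g "pencil s" "orth n (flag_space s i)"] pencil orth_C by blast
  have "g ` (flag_space s 1 + orth n U) \<subseteq> flag_space t 1 + orth n U"
    unfolding plus C using orth_U by (rule set_plus_mono2[OF subset_refl])
  then show "g ` (pencil s \<inter> (flag_space s 1 + orth n U)) \<subseteq> pencil t \<inter> (flag_space t 1 + orth n U)"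
    using image_Int_subset[of g "pencil s" "flag_space s 1 + orth n U"] pencil by blast
  have "g ` (W \<inter> flag_space s 4) \<subseteq> W \<inter> flag_space t 4"
    using image_Int_subset[of g W "flag_space s 4"] unfolding gW C .
  then have "g ` (W \<inter> flag_space s 4 + orth n U) \<subseteq> W \<inter> flag_space t 4 + orth n U"
    unfolding plus using orth_U by (rule set_plus_mono2)
  then show "g ` (pencil s \<inter> (W \<inter> flag_space s 4 + orth n U))
      \<subseteq> pencil t \<inter> (W \<inter> flag_space t 4 + orth n U)"
    using image_Int_subset[of g "pencil s" "W \<inter> flag_space s 4 + orth n U"] pencil by blast
qed

lemma independent_e0_q: "fv.independent {unit_vec 0, q_vec}" "unit_vec 0 \<noteq> q_vec"
proof -
  have "n - 2 \<noteq> 0" "n - 2 \<noteq> 2"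
    using n_ge_6 by arith+
  then have "echelon [unit_vec 0, q_vec]"
    by (intro echelon_ConsI[where k = 0] echelon_ConsI[where k = 2]) (auto simp: q_vec_def)
  then show "fv.independent {unit_vec 0, q_vec}" "unit_vec 0 \<noteq> q_vec"
    using echelon_independent by fastforce+
qed

lemma config_orbit_eq_imp_eq:
  assumes "orbit n (config s) = orbit n (config t)"
  shows "s = t"
proof -
  obtain g where g: "g \<in> orth_group n" and act: "act g (config s) = config t"
    using orbit_eq_imp_act[OF assms] .
  have "set [1..<5] = {1..4::nat}"
    by auto
  then have gW: "g ` W = W" and gU: "g ` U = U"
    and gC: "\<forall>k\<in>{1..4}. g ` flag_space s k = flag_space t k"
    using act by (simp_all add: config_def act_def)
  note images = orth_group_maps_pencil_lines[OF g gW gU gC]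
  have lines: "g q_vec \<in> fv.span {q_vec}" "g (unit_vec 0) \<in> fv.span {unit_vec 0}"
    "g (unit_vec 0 - q_vec) \<in> fv.span {unit_vec 0 - q_vec}"
    "g (scl s (unit_vec 0) + q_vec) \<in> fv.span {scl t (unit_vec 0) + q_vec}"
    by (rule subsetD[OF line_q_subset subsetD[OF images(1) imageI[OF line_q_mem]]],
        rule subsetD[OF line_e0_subset subsetD[OF images(4) imageI[OF line_e0_mem]]],
        rule subsetD[OF line_e0_minus_q_subset subsetD[OF images(2) imageI[OF line_e0_minus_q_mem]]],
        rule subsetD[OF line_param_subset subsetD[OF images(3) imageI[OF line_param_mem]]])
  have lin: "Vector_Spaces.linear scl scl g" and inj: "inj_on g (Vsp n)"
    using g by (auto simp: orth_group_def bij_betw_def)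
  have "g 0 = 0"
    using lin by (simp add: linear_iff_module_hom module_hom.zero)
  moreover have "unit_vec 0 \<in> Vsp n" "0 \<in> Vsp n"
    using n_ge_6 by (auto simp: Vsp_def)
  ultimately have "g (unit_vec 0) \<noteq> 0"
    using inj_onD[OF inj] unit_vec_nonzero by metis
  then show "s = t"
    using fv.pencil_parameter_preserved[OF lin independent_e0_q] lines by blast
qed

lemma infinite_orbits:
  assumes "infinite (UNIV :: 'a::field set)"
  shows "infinite (orbit n ` (triple_space n [n] [\<beta>] gs
           :: ((nat \<Rightarrow> 'a) set list \<times> (nat \<Rightarrow> 'a) set list \<times> (nat \<Rightarrow> 'a) set list) set))"
proof
  assume fin: "finite (orbit n ` (triple_space n [n] [\<beta>] gs
           :: ((nat \<Rightarrow> 'a) set list \<times> (nat \<Rightarrow> 'a) set list \<times> (nat \<Rightarrow> 'a) set list) set))"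
  have "range (\<lambda>t :: 'a. orbit n (config t)) \<subseteq> orbit n ` triple_space n [n] [\<beta>] gs"
    using config_in_triple_space by blast
  then have "finite (range (\<lambda>t :: 'a. orbit n (config t)))"
    using fin finite_subset by blast
  moreover have "inj (\<lambda>t :: 'a. orbit n (config t))"
    by (rule injI) (rule config_orbit_eq_imp_eq)
  ultimately show False
    using assms finite_imageD by blast
qed

end

theorem proposition3p19:
  fixes n \<beta> \<gamma>1 \<gamma>2 \<gamma>3 \<gamma>4 :: nat
  assumes "infinite (UNIV :: 'a::field set)"
    and "(2::'a) \<noteq> 0"
    and "4 \<le> \<beta>" and "\<beta> \<le> n - 2"
    and "0 < \<gamma>1" and "0 < \<gamma>2" and "0 < \<gamma>3" and "0 < \<gamma>4"
    and "\<gamma>1 + \<gamma>2 + \<gamma>3 + \<gamma>4 < n"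
    and "2 \<le> \<gamma>1 \<or> 2 \<le> \<gamma>2 \<or> 2 \<le> \<gamma>3 \<or> 2 \<le> \<gamma>4"
  shows "infinite (orbit n ` (triple_space n [n] [\<beta>] [\<gamma>1, \<gamma>2, \<gamma>3, \<gamma>4]
           :: ((nat \<Rightarrow> 'a) set list \<times> (nat \<Rightarrow> 'a) set list \<times> (nat \<Rightarrow> 'a) set list) set))"
proof -
  \<comment> \<open>The construction works in every characteristic.\<close>
  have "\<exists>i\<in>{1..4}. 2 \<le> [\<gamma>1, \<gamma>2, \<gamma>3, \<gamma>4] ! (i - 1)"
    using assms(10)
  proof (elim disjE)
    assume "2 \<le> \<gamma>1" then show ?thesis by (intro bexI[of _ 1]) simp_all
  next
    assume "2 \<le> \<gamma>2" then show ?thesis by (intro bexI[of _ 2]) simp_all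
  next
    assume "2 \<le> \<gamma>3" then show ?thesis by (intro bexI[of _ 3]) simp_all
  next
    assume "2 \<le> \<gamma>4" then show ?thesis by (intro bexI[of _ 4]) simp_all
  qed
  then obtain i where i: "i \<in> {1..4}" "2 \<le> [\<gamma>1, \<gamma>2, \<gamma>3, \<gamma>4] ! (i - 1)"
    by blast
  interpret orbit_family n \<beta> i "[\<gamma>1, \<gamma>2, \<gamma>3, \<gamma>4]"
    using assms i by unfold_locales auto
  show ?thesis
    using infinite_orbits[OF assms(1)] .
qed

end
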